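(* Let $A$ be a real reduced multiring. Define a ternary relation $D$ on $A$ by $d\in D(a,b)$ iff $d\in d^2a+d^2b$. Then $(A,\cdot,1,0,-1,D)$ is a real semigroup, and its transversal representation satisfies $D^t(a,b)=a+b$ for all $a,b\in A$.
   Context: A multiring is a tuple $(R,+,\cdot,-,0,1)$ with $+:R\times R\to\mathcal P(R)\setminus\{\emptyset\}$ satisfying: $z\in x+y\Rightarrow x\in z+(-y)$ and $y\in(-x)+z$; $y\in0+x\iff y=x$; $(x+y)+z=x+(y+z)$ (with $Z+w=\bigcup_{z\in Z}(z+w)$); $x+y=y+x$; $(R,\cdot,1)$ a commutative monoid; $a0=0$; $c\in a+b\Rightarrow cd\in ad+bd$. A multiring $A$ is real reduced if $1\ne0$ and for all $a,b,c,d$: $a^3=a$; $c\in a+ab^2\Rightarrow c=a$; $c,d\in a^2+b^2\Rightarrow c=d$. In $A$, $-1$ denotes $-(1)$. A ternary semigroup is $(S,\cdot,1,0,-1)$ with: $(S,\cdot,1)$ a commutative semigroup with unity; $x^3=x$; $-1\ne1$, $(-1)(-1)=1$; $x0=0$; $x=(-1)x\Rightarrow x=0$. A real semigroup is a ternary semigroup with a ternary relation $D$, where $a\in D^t(b,c)$ means $a\in D(b,c)$, $-b\in D(-a,c)$ and $-c\in D(b,-a)$ (with $-x=(-1)x$), satisfying: (RS0) $c\in D(a,b)\iff c\in D(b,a)$; (RS1) $a\in D(a,b)$; (RS2) $a\in D(b,c)\Rightarrow ad\in D(bd,cd)$; (RS3) $a\in D^t(b,c)$, $c\in D^t(d,e)\Rightarrow\exists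 x\in D^t(b,d)$ with $a\in D^t(x,e)$; (RS4) $e\in D(c^2a,d^2b)\Rightarrow e\in D(a,b)$; (RS5) $ad=bd$, $ae=be$, $c\in D(d,e)\Rightarrow ac=bc$; (RS6) $c\in D(a,b)\Rightarrow c\in D^t(c^2a,c^2b)$; (RS7) $D^t(a,-b)\cap D^t(b,-a)\ne\emptyset\Rightarrow a=b$; (RS8) $a\in D(b,c)\Rightarrow a^2\in D(b^2,c^2)$. *)

theory Defs
  imports Main
begin

definition multiring ::
  "('a \<Rightarrow> 'a \<Rightarrow> 'a set) \<Rightarrow> ('a \<Rightarrow> 'a) \<Rightarrow> ('a \<Rightarrow> 'a \<Rightarrow> 'a) \<Rightarrow> 'a \<Rightarrow> 'a \<Rightarrow> bool" where
  "multiring add neg mul zero one \<longleftrightarrow>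
     (\<forall>x y. add x y \<noteq> {}) \<and>
     (\<forall>x y z. z \<in> add x y \<longrightarrow> x \<in> add z (neg y) \<and> y \<in> add (neg x) z) \<and>
     (\<forall>x y. y \<in> add zero x \<longleftrightarrow> y = x) \<and>
     (\<forall>x y z. (\<Union>w\<in>add x y. add w z) = (\<Union>w\<in>add y z. add x w)) \<and>
     (\<forall>x y. add x y = add y x) \<and>
     (\<forall>x y z. mul (mul x y) z = mul x (mul y z)) \<and>
     (\<forall>x y. mul x y = mul y x) \<and>
     (\<forall>x. mul x one = x) \<and>
     (\<forall>a. mul a zero = zero) \<and>
     (\<forall>a b c d. c \<in> add a b \<longrightarrow> mul c d \<in> add (mul a d) (mul b d))"

definition real_reduced_multiring ::
  "('a \<Rightarrow> 'a \<Rightarrow> 'a set) \<Rightarrow> ('a \<Rightarrow> 'a) \<Rightarrow> ('a \<Rightarrow> 'a \<Rightarrow> 'a) \<Rightarrow> 'a \<Rightarrow> 'a \<Rightarrow> bool" where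
  "real_reduced_multiring add neg mul zero one \<longleftrightarrow>
     multiring add neg mul zero one \<and> one \<noteq> zero \<and>
     (\<forall>a. mul a (mul a a) = a) \<and>
     (\<forall>a b c. c \<in> add a (mul a (mul b b)) \<longrightarrow> c = a) \<and>
     (\<forall>a b c d. c \<in> add (mul a a) (mul b b) \<and> d \<in> add (mul a a) (mul b b) \<longrightarrow> c = d)"

definition ternary_semigroup ::
  "('a \<Rightarrow> 'a \<Rightarrow> 'a) \<Rightarrow> 'a \<Rightarrow> 'a \<Rightarrow> 'a \<Rightarrow> bool" where
  "ternary_semigroup mul one zero m1 \<longleftrightarrow>
     (\<forall>x y z. mul (mul x y) z = mul x (mul y z)) \<and>
     (\<forall>x y. mul x y = mul y x) \<and>
     (\<forall>x. mul x one = x) \<and>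
     (\<forall>x. mul x (mul x x) = x) \<and>
     m1 \<noteq> one \<and> mul m1 m1 = one \<and>
     (\<forall>x. mul x zero = zero) \<and>
     (\<forall>x. x = mul m1 x \<longrightarrow> x = zero)"

definition Dt ::
  "('a \<Rightarrow> 'a \<Rightarrow> 'a) \<Rightarrow> 'a \<Rightarrow> ('a \<Rightarrow> 'a \<Rightarrow> 'a set) \<Rightarrow> 'a \<Rightarrow> 'a \<Rightarrow> 'a set" where
  "Dt mul m1 D b c = {a. a \<in> D b c \<and> mul m1 b \<in> D (mul m1 a) c \<and> mul m1 c \<in> D b (mul m1 a)}"

definition real_semigroup ::
  "('a \<Rightarrow> 'a \<Rightarrow> 'a) \<Rightarrow> 'a \<Rightarrow> 'a \<Rightarrow> 'a \<Rightarrow> ('a \<Rightarrow> 'a \<Rightarrow> 'a set) \<Rightarrow> bool" where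
  "real_semigroup mul one zero m1 D \<longleftrightarrow>
     ternary_semigroup mul one zero m1 \<and>
     (\<forall>a b c. c \<in> D a b \<longleftrightarrow> c \<in> D b a) \<and>
     (\<forall>a b. a \<in> D a b) \<and>
     (\<forall>a b c d. a \<in> D b c \<longrightarrow> mul a d \<in> D (mul b d) (mul c d)) \<and>
     (\<forall>a b c d e. a \<in> Dt mul m1 D b c \<and> c \<in> Dt mul m1 D d e \<longrightarrow>
        (\<exists>x \<in> Dt mul m1 D b d. a \<in> Dt mul m1 D x e)) \<and>
     (\<forall>a b c d e. e \<in> D (mul (mul c c) a) (mul (mul d d) b) \<longrightarrow> e \<in> D a b) \<and>
     (\<forall>a b c d e. mul a d = mul b d \<and> mul a e = mul b e \<and> c \<in> D d e \<longrightarrow> mul a c = mul b c) \<and>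
     (\<forall>a b c. c \<in> D a b \<longrightarrow> c \<in> Dt mul m1 D (mul (mul c c) a) (mul (mul c c) b)) \<and>
     (\<forall>a b. Dt mul m1 D a (mul m1 b) \<inter> Dt mul m1 D b (mul m1 a) \<noteq> {} \<longrightarrow> a = b) \<and>
     (\<forall>a b c. a \<in> D b c \<longrightarrow> mul a a \<in> D (mul b b) (mul c c))"

end

theory Submission
  imports Defs
begin

text \<open>In a real reduced multiring, sums of squares behave like supports: every \<open>s \<in> a\<^sup>2 + b\<^sup>2\<close>
  is a multiplicative idempotent, uniquely determined by \<open>a\<close> and \<open>b\<close>, and it absorbs every
  \<open>c \<in> a + b\<close>, i.e. \<open>c s = c\<close>.  With this, the two extra conditions in the transversal relation
  \<open>D\<^sup>t(a,b)\<close> force an element of \<open>D(a,b)\<close> into \<open>a + b\<close>, and conversely multiplying \<open>d \<in> a + b\<close>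
  by \<open>d\<^sup>2\<close>, \<open>a\<^sup>2\<close>, \<open>b\<^sup>2\<close> shows \<open>d \<in> D\<^sup>t(a,b)\<close>.  Once \<open>D\<^sup>t = +\<close>, the real semigroup axioms
  involving \<open>D\<^sup>t\<close> are multiring axioms; the others follow by cancelling square factors
  with the same absorption law.\<close>

locale rr_multiring =
  fixes add :: "'a \<Rightarrow> 'a \<Rightarrow> 'a set" (infix "\<oplus>" 65) and neg :: "'a \<Rightarrow> 'a"
    and mul :: "'a \<Rightarrow> 'a \<Rightarrow> 'a" (infixl "\<cdot>" 70) and zero one :: 'a
  assumes real_reduced: "real_reduced_multiring add neg mul zero one"
begin

lemma add_nonempty: "x \<oplus> y \<noteq> {}"
  using real_reduced unfolding real_reduced_multiring_def multiring_def by meson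

lemma add_rev_left: "z \<in> x \<oplus> y \<Longrightarrow> x \<in> z \<oplus> neg y"
  using real_reduced unfolding real_reduced_multiring_def multiring_def by meson

lemma add_rev_right: "z \<in> x \<oplus> y \<Longrightarrow> y \<in> neg x \<oplus> z"
  using real_reduced unfolding real_reduced_multiring_def multiring_def by meson

lemma zero_add_iff: "y \<in> zero \<oplus> x \<longleftrightarrow> y = x"
  using real_reduced unfolding real_reduced_multiring_def multiring_def by metis

lemma add_assoc: "(\<Union>w\<in>x \<oplus> y. w \<oplus> z) = (\<Union>w\<in>y \<oplus> z. x \<oplus> w)"
  using real_reduced unfolding real_reduced_multiring_def multiring_def by meson

lemma add_commute: "x \<oplus> y = y \<oplus> x"
  using real_reduced unfolding real_reduced_multiring_def multiring_def by meson

lemma mul_assoc: "x \<cdot> y \<cdot> z = x \<cdot> (y \<cdot> z)"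
  using real_reduced unfolding real_reduced_multiring_def multiring_def by meson

lemma mul_commute: "x \<cdot> y = y \<cdot> x"
  using real_reduced unfolding real_reduced_multiring_def multiring_def by meson

lemma mul_one [simp]: "x \<cdot> one = x"
  using real_reduced unfolding real_reduced_multiring_def multiring_def by meson

lemma mul_zero [simp]: "x \<cdot> zero = zero"
  using real_reduced unfolding real_reduced_multiring_def multiring_def by meson

lemma mul_add: "c \<in> a \<oplus> b \<Longrightarrow> c \<cdot> d \<in> a \<cdot> d \<oplus> b \<cdot> d"
  using real_reduced unfolding real_reduced_multiring_def multiring_def by meson

lemma one_neq_zero: "one \<noteq> zero"
  using real_reduced unfolding real_reduced_multiring_def by meson

lemma mul_cube [simp]: "a \<cdot> (a \<cdot> a) = a"
  using real_reduced unfolding real_reduced_multiring_def by meson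

lemma add_mul_square_eq: "c \<in> a \<oplus> a \<cdot> (b \<cdot> b) \<Longrightarrow> c = a"
  using real_reduced unfolding real_reduced_multiring_def by meson

lemma add_squares_unique: "c \<in> a \<cdot> a \<oplus> b \<cdot> b \<Longrightarrow> d \<in> a \<cdot> a \<oplus> b \<cdot> b \<Longrightarrow> c = d"
  using real_reduced unfolding real_reduced_multiring_def by meson

lemma mul_left_commute: "x \<cdot> (y \<cdot> z) = y \<cdot> (x \<cdot> z)"
  by (simp only: mul_assoc[symmetric] mul_commute[of x y])

lemmas mul_ac = mul_assoc mul_commute mul_left_commute

lemma one_mul [simp]: "one \<cdot> x = x"
  using mul_one mul_commute by metis

lemma zero_mul [simp]: "zero \<cdot> x = zero"
  using mul_zero mul_commute by metis

lemma mul_cube_left [simp]: "a \<cdot> (a \<cdot> (a \<cdot> b)) = a \<cdot> b"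
proof -
  have "a \<cdot> (a \<cdot> (a \<cdot> b)) = a \<cdot> (a \<cdot> a) \<cdot> b"
    by (simp only: mul_assoc)
  then show ?thesis
    by simp
qed

lemma mul_square_idem [simp]: "a \<cdot> a \<cdot> (a \<cdot> a) = a \<cdot> a"
  by (simp only: mul_assoc mul_cube_left)

lemma add_assoc_right:
  "w \<in> u \<oplus> z \<Longrightarrow> u \<in> x \<oplus> y \<Longrightarrow> \<exists>v. v \<in> y \<oplus> z \<and> w \<in> x \<oplus> v"
  using add_assoc[where x=x and y=y and z=z] by blast

lemma add_assoc_left:
  "w \<in> x \<oplus> v \<Longrightarrow> v \<in> y \<oplus> z \<Longrightarrow> \<exists>u. u \<in> x \<oplus> y \<and> w \<in> u \<oplus> z"
  using add_assoc[where x=x and y=y and z=z] by blast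

lemma add_self_eq: "c \<in> a \<oplus> a \<Longrightarrow> c = a"
  using add_mul_square_eq[of c a one] by simp

lemma add_mul_square: "a \<in> a \<oplus> a \<cdot> (b \<cdot> b)"
  using add_nonempty add_mul_square_eq by blast

lemma zero_mem_add_neg: "zero \<in> x \<oplus> neg x"
  using add_rev_left zero_add_iff by blast

lemma neg_unique: "zero \<in> x \<oplus> y \<Longrightarrow> y = neg x"
  using add_rev_right add_commute zero_add_iff by blast

lemma neg_one_mul [simp]: "neg one \<cdot> x = neg x"
proof -
  have "zero \<cdot> x \<in> one \<cdot> x \<oplus> neg one \<cdot> x"
    using zero_mem_add_neg by (rule mul_add)
  then show ?thesis
    using neg_unique by simp
qed

lemma neg_neg [simp]: "neg (neg x) = x"
proof -
  have "zero \<in> neg x \<oplus> x"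
    using zero_mem_add_neg add_commute by blast
  from neg_unique[OF this] show ?thesis
    by simp
qed

lemma neg_one_square: "neg one \<cdot> neg one = one"
  by simp

lemma neg_mul_left: "neg x \<cdot> y = neg (x \<cdot> y)"
  by (simp only: neg_one_mul[of x, symmetric] neg_one_mul[of "x \<cdot> y", symmetric] mul_assoc)

lemma neg_mul_right: "x \<cdot> neg y = neg (x \<cdot> y)"
  by (simp only: neg_one_mul[of y, symmetric] neg_one_mul[of "x \<cdot> y", symmetric] mul_left_commute)

lemma neg_add: "z \<in> x \<oplus> y \<Longrightarrow> neg z \<in> neg x \<oplus> neg y"
  using mul_add[of z x y "neg one"] by (simp only: mul_commute[of _ "neg one"] neg_one_mul)

lemma neg_mem_neg_add_iff: "neg x \<in> neg y \<oplus> z \<longleftrightarrow> y \<in> x \<oplus> z"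
proof
  assume "neg x \<in> neg y \<oplus> z"
  then have "neg y \<in> neg x \<oplus> neg z"
    by (rule add_rev_left)
  from neg_add[OF this] show "y \<in> x \<oplus> z"
    by simp
next
  assume "y \<in> x \<oplus> z"
  then have "x \<in> y \<oplus> neg z"
    by (rule add_rev_left)
  from neg_add[OF this] show "neg x \<in> neg y \<oplus> z"
    by simp
qed

subsection \<open>Sums of squares\<close>

lemma one_mem_one_add: "one \<in> one \<oplus> y"
proof -
  \<comment> \<open>for \<open>t \<in> 1 + y\<close> one shows \<open>t\<^sup>2 \<in> 1 + y\<close>; then \<open>1 \<in> 1 + t\<^sup>2 \<subseteq> (1 + 1) + y\<close> and \<open>1 + 1 = {1}\<close>\<close>
  obtain t where t: "t \<in> one \<oplus> y"
    using add_nonempty by blast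
  have ty: "t \<cdot> y \<in> y \<oplus> y \<cdot> y"
    using mul_add[OF t, of y] by simp
  have tt: "t \<cdot> t \<in> t \<oplus> y \<cdot> t"
    using mul_add[OF t, of t] by simp
  obtain v where v: "v \<in> y \<oplus> t \<cdot> y" and ttv: "t \<cdot> t \<in> one \<oplus> v"
    using add_assoc_right[OF tt t] by (auto simp: mul_commute)
  obtain u where "u \<in> y \<oplus> y" and "v \<in> u \<oplus> y \<cdot> y"
    using add_assoc_left[OF v ty] by blast
  then have "v \<in> y \<cdot> y \<oplus> y"
    using add_self_eq add_commute by blast
  then obtain u' where "u' \<in> one \<oplus> y \<cdot> y" and "t \<cdot> t \<in> u' \<oplus> y"
    using add_assoc_left[OF ttv] by blast
  then have tt_one: "t \<cdot> t \<in> one \<oplus> y"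
    using add_mul_square_eq[of u' one y] by simp
  have "one \<in> one \<oplus> t \<cdot> t"
    using add_mul_square[of one t] by simp
  then obtain u'' where "u'' \<in> one \<oplus> one" and "one \<in> u'' \<oplus> y"
    using add_assoc_left tt_one by blast
  then show ?thesis
    using add_self_eq by blast
qed

lemma mem_add_mul: "x \<in> x \<oplus> x \<cdot> y"
  using mul_add[OF one_mem_one_add[of y], of x] by (simp add: mul_commute)

lemma mul_sum_squares: "s \<in> a \<cdot> a \<oplus> b \<cdot> b \<Longrightarrow> a \<cdot> s = a"
  using mul_add[of s "a \<cdot> a" "b \<cdot> b" a] add_mul_square_eq by (simp add: mul_ac)

lemma sum_squares_idem:
  assumes s: "s \<in> a \<cdot> a \<oplus> b \<cdot> b"
  shows "s \<cdot> s = s"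
proof -
  have "a \<cdot> a \<cdot> s = a \<cdot> a" "b \<cdot> b \<cdot> s = b \<cdot> b"
    using mul_sum_squares[OF s] mul_sum_squares[of s b a] s add_commute
    by (simp_all add: mul_assoc)
  then have "s \<cdot> s \<in> a \<cdot> a \<oplus> b \<cdot> b"
    using mul_add[OF s, of s] by simp
  then show ?thesis
    using s add_squares_unique by blast
qed

lemma idem_absorbs_sum:
  assumes "e \<cdot> e = e" and "t \<cdot> t = t" and "r \<cdot> t = r" and e: "e \<in> t \<oplus> r"
  shows "t \<cdot> e = e"
proof -
  have "t \<in> t \<oplus> r"
    using mem_add_mul[of t r] \<open>r \<cdot> t = r\<close> by (simp add: mul_commute)
  then have "r \<in> t \<oplus> neg t"
    using add_rev_right add_commute by blast
  then obtain u where "u \<in> t \<oplus> t" and "e \<in> u \<oplus> neg t"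
    using add_assoc_left[OF e] by blast
  then have "t \<in> e \<oplus> t"
    using add_self_eq add_rev_left by fastforce
  then have "t \<cdot> e \<in> e \<cdot> e \<oplus> t \<cdot> e"
    by (rule mul_add)
  then have "t \<cdot> e \<in> e \<oplus> e \<cdot> (t \<cdot> t)"
    using assms(1,2) by (simp add: mul_commute)
  then show ?thesis
    by (rule add_mul_square_eq)
qed

text \<open>The key absorption law: writing \<open>c\<^sup>2 \<in> (a\<^sup>2 + b\<^sup>2) + ab\<close> exhibits \<open>c\<^sup>2\<close> in the form
  required by the previous lemma, with \<open>t = s\<close> and \<open>r = ab\<close>.\<close>

lemma sum_mul_sum_squares:
  assumes c: "c \<in> a \<oplus> b" and s: "s \<in> a \<cdot> a \<oplus> b \<cdot> b"
  shows "c \<cdot> s = c"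
proof -
  have ca: "c \<cdot> a \<in> a \<cdot> a \<oplus> a \<cdot> b"
    using mul_add[OF c, of a] by (simp add: mul_commute)
  have cb: "c \<cdot> b \<in> a \<cdot> b \<oplus> b \<cdot> b"
    using mul_add[OF c, of b] by simp
  have cc: "c \<cdot> c \<in> c \<cdot> a \<oplus> c \<cdot> b"
    using mul_add[OF c, of c] by (simp add: mul_commute)
  obtain v where v: "v \<in> a \<cdot> b \<oplus> c \<cdot> b" and ccv: "c \<cdot> c \<in> a \<cdot> a \<oplus> v"
    using add_assoc_right[OF cc ca] by blast
  obtain u where "u \<in> a \<cdot> b \<oplus> a \<cdot> b" and "v \<in> u \<oplus> b \<cdot> b"
    using add_assoc_left[OF v cb] by blast
  then have "v \<in> b \<cdot> b \<oplus> a \<cdot> b"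
    using add_self_eq add_commute by blast
  then obtain u' where "u' \<in> a \<cdot> a \<oplus> b \<cdot> b" and "c \<cdot> c \<in> u' \<oplus> a \<cdot> b"
    using add_assoc_left[OF ccv] by blast
  then have ccs: "c \<cdot> c \<in> s \<oplus> a \<cdot> b"
    using s add_squares_unique by blast
  have "a \<cdot> b \<cdot> s = b \<cdot> (a \<cdot> s)"
    by (simp only: mul_ac)
  then have "a \<cdot> b \<cdot> s = a \<cdot> b"
    using mul_sum_squares[OF s] by (simp add: mul_commute)
  from idem_absorbs_sum[OF mul_square_idem sum_squares_idem[OF s] this ccs]
  have "s \<cdot> (c \<cdot> c) = c \<cdot> c" .
  have "c \<cdot> s = c \<cdot> (c \<cdot> c) \<cdot> s"
    by simp
  also have "\<dots> = c \<cdot> (s \<cdot> (c \<cdot> c))"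
    by (simp only: mul_ac)
  also have "\<dots> = c"
    using \<open>s \<cdot> (c \<cdot> c) = c \<cdot> c\<close> by simp
  finally show ?thesis .
qed

lemma sum_mul_squares:
  assumes c: "c \<in> x \<cdot> (y \<cdot> y) \<oplus> x \<cdot> (z \<cdot> z)" and s: "s \<in> y \<cdot> y \<oplus> z \<cdot> z"
  shows "c = x \<cdot> s"
proof -
  have x2s: "x \<cdot> x \<cdot> s \<in> x \<cdot> y \<cdot> (x \<cdot> y) \<oplus> x \<cdot> z \<cdot> (x \<cdot> z)"
    using mul_add[OF s, of "x \<cdot> x"] by (simp add: mul_ac)
  have "c \<cdot> x \<in> x \<cdot> y \<cdot> (x \<cdot> y) \<oplus> x \<cdot> z \<cdot> (x \<cdot> z)"
    using mul_add[OF c, of x] by (simp add: mul_ac)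
  then have cx: "c \<cdot> x = x \<cdot> x \<cdot> s"
    using x2s add_squares_unique by blast
  have "x \<cdot> x \<cdot> s \<in> x \<cdot> (y \<cdot> y) \<cdot> (x \<cdot> (y \<cdot> y)) \<oplus> x \<cdot> (z \<cdot> z) \<cdot> (x \<cdot> (z \<cdot> z))"
    using x2s by (simp add: mul_ac)
  then have "c \<cdot> (x \<cdot> x \<cdot> s) = c"
    using sum_mul_sum_squares[OF c] by simp
  then have "c = c \<cdot> x \<cdot> (x \<cdot> s)"
    by (simp add: mul_ac)
  also have "\<dots> = x \<cdot> (x \<cdot> (x \<cdot> (s \<cdot> s)))"
    using cx by (simp add: mul_ac)
  also have "\<dots> = x \<cdot> s"
    using sum_squares_idem[OF s] by simp
  finally show ?thesis .
qed

lemma cancel_square_factor: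
  assumes e: "e \<in> g \<cdot> g \<cdot> p \<oplus> q" and p: "e \<cdot> e \<cdot> p = p"
  shows "e \<in> p \<oplus> q"
proof -
  obtain s where s: "s \<in> g \<cdot> g \<cdot> p \<cdot> (g \<cdot> g \<cdot> p) \<oplus> q \<cdot> q"
    using add_nonempty by blast
  have "e \<cdot> s = e"
    by (rule sum_mul_sum_squares[OF e s])
  have ps: "p \<cdot> s = p"
  proof -
    have "p \<cdot> s = e \<cdot> (e \<cdot> s) \<cdot> p"
      using p by (metis mul_assoc mul_commute)
    then show ?thesis
      using \<open>e \<cdot> s = e\<close> p by simp
  qed
  have "q \<in> q \<cdot> (q \<cdot> p) \<oplus> q"
    using mem_add_mul[of q "q \<cdot> p"] add_commute by blast
  then obtain w where "w \<in> g \<cdot> g \<cdot> p \<oplus> q \<cdot> (q \<cdot> p)" and ew: "e \<in> w \<oplus> q"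
    using add_assoc_left[OF e] by blast
  then have w: "w \<in> p \<cdot> (g \<cdot> g) \<oplus> p \<cdot> (q \<cdot> q)"
    by (simp add: mul_ac)
  obtain s' where s': "s' \<in> g \<cdot> g \<oplus> q \<cdot> q"
    using add_nonempty by blast
  have "p \<cdot> p \<cdot> s' \<in> p \<cdot> g \<cdot> (p \<cdot> g) \<oplus> p \<cdot> q \<cdot> (p \<cdot> q)"
    using mul_add[OF s', of "p \<cdot> p"] by (simp add: mul_ac)
  moreover have "p \<cdot> p \<cdot> s \<in> p \<cdot> g \<cdot> (p \<cdot> g) \<oplus> p \<cdot> q \<cdot> (p \<cdot> q)"
    using mul_add[OF s, of "p \<cdot> p"] by (simp add: mul_ac)
  ultimately have "p \<cdot> p \<cdot> s' = p \<cdot> p \<cdot> s"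
    using add_squares_unique by blast
  also have "\<dots> = p \<cdot> p"
    using ps by (simp add: mul_assoc)
  finally have "p \<cdot> (p \<cdot> p \<cdot> s') = p \<cdot> (p \<cdot> p)"
    by simp
  then have "p \<cdot> s' = p"
    by (simp add: mul_ac)
  then show ?thesis
    using ew sum_mul_squares[OF w s'] by simp
qed

definition rep :: "'a \<Rightarrow> 'a \<Rightarrow> 'a set" where
  "rep a b = {d. d \<in> d \<cdot> d \<cdot> a \<oplus> d \<cdot> d \<cdot> b}"

lemma rep_mul_sum_squares:
  assumes d: "d \<in> rep a b" and s: "s \<in> a \<cdot> a \<oplus> b \<cdot> b"
  shows "d \<cdot> s = d"
proof -
  have "d \<cdot> d \<cdot> s \<in> d \<cdot> d \<cdot> a \<cdot> (d \<cdot> d \<cdot> a) \<oplus> d \<cdot> d \<cdot> b \<cdot> (d \<cdot> d \<cdot> b)"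
    using mul_add[OF s, of "d \<cdot> d"] by (simp add: mul_ac)
  then have "d \<cdot> (d \<cdot> d \<cdot> s) = d"
    using d sum_mul_sum_squares unfolding rep_def by blast
  then show ?thesis
    by (simp add: mul_ac)
qed

lemma Dt_rep_iff:
  "d \<in> Dt mul (neg one) rep a b \<longleftrightarrow>
     d \<in> rep a b \<and> a \<cdot> a \<cdot> d \<in> a \<oplus> a \<cdot> a \<cdot> b \<and> b \<cdot> b \<cdot> d \<in> b \<cdot> b \<cdot> a \<oplus> b"
proof -
  have "neg one \<cdot> a \<in> rep (neg one \<cdot> d) b \<longleftrightarrow> a \<cdot> a \<cdot> d \<in> a \<oplus> a \<cdot> a \<cdot> b"
    using neg_mem_neg_add_iff[of a "a \<cdot> a \<cdot> d" "a \<cdot> a \<cdot> b"]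
    by (simp add: rep_def neg_mul_left neg_mul_right)
  moreover have "neg one \<cdot> b \<in> rep a (neg one \<cdot> d) \<longleftrightarrow> b \<cdot> b \<cdot> d \<in> b \<cdot> b \<cdot> a \<oplus> b"
    using neg_mem_neg_add_iff[of b "b \<cdot> b \<cdot> d" "b \<cdot> b \<cdot> a"]
    by (simp add: rep_def neg_mul_left neg_mul_right add_commute)
  ultimately show ?thesis
    unfolding Dt_def by blast
qed

lemma mem_add_if_Dt_conditions:
  assumes d: "d \<in> rep a b" and x: "a \<cdot> a \<cdot> d \<in> a \<oplus> a \<cdot> a \<cdot> b"
    and y: "b \<cdot> b \<cdot> d \<in> b \<cdot> b \<cdot> a \<oplus> b"
  shows "d \<in> a \<oplus> b"
proof -
  obtain s where s: "s \<in> a \<cdot> a \<oplus> b \<cdot> b"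
    using add_nonempty by blast
  have "d \<cdot> s \<in> a \<cdot> a \<cdot> d \<oplus> b \<cdot> b \<cdot> d"
    using mul_add[OF s, of d] by (simp add: mul_commute)
  then obtain v where v: "v \<in> a \<cdot> a \<cdot> b \<oplus> b \<cdot> b \<cdot> d" and dsv: "d \<cdot> s \<in> a \<oplus> v"
    using add_assoc_right[OF _ x] by blast
  have "b \<cdot> b \<cdot> d \<in> b \<oplus> b \<cdot> b \<cdot> a"
    using y add_commute by blast
  then obtain u where "u \<in> a \<cdot> a \<cdot> b \<oplus> b" and "v \<in> u \<oplus> b \<cdot> b \<cdot> a"
    using add_assoc_left[OF v] by blast
  moreover have "w = b" if "w \<in> a \<cdot> a \<cdot> b \<oplus> b" for w
    using that add_mul_square_eq[of w b a] by (simp add: add_commute mul_ac)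
  ultimately have "v \<in> b \<cdot> b \<cdot> a \<oplus> b"
    using add_commute by blast
  then obtain u' where u': "u' \<in> a \<oplus> b \<cdot> b \<cdot> a" and "d \<cdot> s \<in> u' \<oplus> b"
    using add_assoc_left[OF dsv] by blast
  moreover have "u' = a"
    using u' add_mul_square_eq[of u' a b] by (simp add: mul_ac)
  ultimately show ?thesis
    using rep_mul_sum_squares[OF d s] by simp
qed

lemma Dt_rep_eq_add: "Dt mul (neg one) rep a b = a \<oplus> b"
proof (intro set_eqI iffI)
  fix d
  assume "d \<in> Dt mul (neg one) rep a b"
  then show "d \<in> a \<oplus> b"
    using mem_add_if_Dt_conditions Dt_rep_iff by blast
next
  fix d
  assume d: "d \<in> a \<oplus> b"
  have "d \<in> rep a b"
    using mul_add[OF d, of "d \<cdot> d"] by (simp add: rep_def mul_commute)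
  moreover have "a \<cdot> a \<cdot> d \<in> a \<oplus> a \<cdot> a \<cdot> b"
    using mul_add[OF d, of "a \<cdot> a"] by (simp add: mul_ac)
  moreover have "b \<cdot> b \<cdot> d \<in> b \<cdot> b \<cdot> a \<oplus> b"
    using mul_add[OF d, of "b \<cdot> b"] by (simp add: mul_ac)
  ultimately show "d \<in> Dt mul (neg one) rep a b"
    using Dt_rep_iff by blast
qed

subsection \<open>The real semigroup axioms\<close>

lemma ternary_semigroup: "ternary_semigroup mul one zero (neg one)"
  unfolding ternary_semigroup_def
proof (intro conjI allI impI)
  show "neg one \<noteq> one"
    using zero_mem_add_neg[of one] add_self_eq one_neq_zero by fastforce
  show "x = zero" if "x = neg one \<cdot> x" for x
    using zero_mem_add_neg[of x] add_self_eq that by fastforce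
qed (simp_all add: mul_ac neg_one_square)

lemma rep_mul_squares:
  assumes "e \<in> rep (c \<cdot> c \<cdot> a) (d \<cdot> d \<cdot> b)"
  shows "e \<in> rep a b"
proof -
  have "e \<in> e \<cdot> e \<cdot> (c \<cdot> c \<cdot> a) \<oplus> e \<cdot> e \<cdot> (d \<cdot> d \<cdot> b)"
    using assms by (simp add: rep_def)
  then have "e \<in> c \<cdot> c \<cdot> (e \<cdot> e \<cdot> a) \<oplus> d \<cdot> d \<cdot> (e \<cdot> e \<cdot> b)"
    by (simp only: mul_ac)
  then have "e \<in> e \<cdot> e \<cdot> a \<oplus> d \<cdot> d \<cdot> (e \<cdot> e \<cdot> b)"
    by (rule cancel_square_factor) (simp add: mul_assoc)
  then have "e \<in> d \<cdot> d \<cdot> (e \<cdot> e \<cdot> b) \<oplus> e \<cdot> e \<cdot> a"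
    by (simp add: add_commute)
  then have "e \<in> e \<cdot> e \<cdot> b \<oplus> e \<cdot> e \<cdot> a"
    by (rule cancel_square_factor) (simp add: mul_assoc)
  then show ?thesis
    by (simp add: rep_def add_commute)
qed

lemma mul_eq_on_rep:
  assumes ad: "a \<cdot> d = b \<cdot> d" and ae: "a \<cdot> e = b \<cdot> e" and c: "c \<in> rep d e"
  shows "a \<cdot> c = b \<cdot> c"
proof -
  obtain s where s: "s \<in> d \<cdot> d \<oplus> e \<cdot> e"
    using add_nonempty by blast
  have "b \<cdot> (d \<cdot> d) = a \<cdot> (d \<cdot> d)" "b \<cdot> (e \<cdot> e) = a \<cdot> (e \<cdot> e)"
    using ad ae by (simp_all add: mul_assoc[symmetric])
  then have "b \<cdot> s \<in> a \<cdot> (d \<cdot> d) \<oplus> a \<cdot> (e \<cdot> e)"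
    using mul_add[OF s, of b] by (simp add: mul_commute)
  then have bs: "b \<cdot> s = a \<cdot> s"
    using sum_mul_squares[OF _ s] by blast
  have cs: "c \<cdot> s = c"
    by (rule rep_mul_sum_squares[OF c s])
  have "a \<cdot> c = a \<cdot> (c \<cdot> s)"
    using cs by simp
  also have "\<dots> = c \<cdot> (a \<cdot> s)"
    by (simp only: mul_ac)
  also have "\<dots> = c \<cdot> (b \<cdot> s)"
    using bs by simp
  also have "\<dots> = b \<cdot> (c \<cdot> s)"
    by (simp only: mul_ac)
  also have "\<dots> = b \<cdot> c"
    using cs by simp
  finally show ?thesis .
qed

lemma add_neg_eq: "c \<in> a \<oplus> neg b \<Longrightarrow> c \<in> b \<oplus> neg a \<Longrightarrow> a = b"
proof -
  assume c1: "c \<in> a \<oplus> neg b" and c2: "c \<in> b \<oplus> neg a"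
  have "a \<in> b \<oplus> c"
    using add_rev_left[OF c1] add_commute by simp
  then obtain u where "u \<in> b \<oplus> b" and "a \<in> u \<oplus> neg a"
    using add_assoc_left c2 by blast
  then have "b \<in> a \<oplus> a"
    using add_self_eq add_rev_left by fastforce
  then have "b = a"
    by (rule add_self_eq)
  then show ?thesis ..
qed

lemma rep_square:
  assumes a: "a \<in> rep b c"
  shows "a \<cdot> a \<in> rep (b \<cdot> b) (c \<cdot> c)"
proof -
  obtain s where s: "s \<in> a \<cdot> b \<cdot> (a \<cdot> b) \<oplus> a \<cdot> c \<cdot> (a \<cdot> c)"
    using add_nonempty by blast
  have "a \<in> a \<cdot> a \<cdot> b \<oplus> a \<cdot> a \<cdot> c"
    using a by (simp add: rep_def)
  moreover have "s \<in> a \<cdot> a \<cdot> b \<cdot> (a \<cdot> a \<cdot> b) \<oplus> a \<cdot> a \<cdot> c \<cdot> (a \<cdot> a \<cdot> c)"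
    using s by (simp add: mul_ac)
  ultimately have as: "a \<cdot> s = a"
    by (rule sum_mul_sum_squares)
  have "s \<cdot> (a \<cdot> a) \<in> a \<cdot> b \<cdot> (a \<cdot> b) \<oplus> a \<cdot> c \<cdot> (a \<cdot> c)"
    using mul_add[OF s, of "a \<cdot> a"] by (simp add: mul_ac)
  then have "s = s \<cdot> (a \<cdot> a)"
    using s add_squares_unique by blast
  also have "\<dots> = a \<cdot> (a \<cdot> s)"
    by (simp only: mul_ac)
  also have "\<dots> = a \<cdot> a"
    using as by simp
  finally show ?thesis
    using s by (simp add: rep_def mul_ac)
qed

lemma real_semigroup_rep: "real_semigroup mul one zero (neg one) rep"
  unfolding real_semigroup_def Dt_rep_eq_add
proof (intro conjI allI impI)
  show "ternary_semigroup mul one zero (neg one)"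
    by (rule ternary_semigroup)
  show "c \<in> rep a b \<longleftrightarrow> c \<in> rep b a" for a b c
    by (simp add: rep_def add_commute)
  show "a \<in> rep a b" for a b
    using mem_add_mul[of a "a \<cdot> b"] by (simp add: rep_def mul_ac)
  show "a \<cdot> d \<in> rep (b \<cdot> d) (c \<cdot> d)" if "a \<in> rep b c" for a b c d
    using that mul_add by (fastforce simp: rep_def mul_ac)
  show "\<exists>x\<in>b \<oplus> d. a \<in> x \<oplus> e" if "a \<in> b \<oplus> c \<and> c \<in> d \<oplus> e" for a b c d e
    using that add_assoc_left by blast
  show "e \<in> rep a b" if "e \<in> rep (c \<cdot> c \<cdot> a) (d \<cdot> d \<cdot> b)" for a b c d e
    using that by (rule rep_mul_squares)
  show "a \<cdot> c = b \<cdot> c" if "a \<cdot> d = b \<cdot> d \<and> a \<cdot> e = b \<cdot> e \<and> c \<in> rep d e" for a b c d e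
    using that mul_eq_on_rep by blast
  show "c \<in> c \<cdot> c \<cdot> a \<oplus> c \<cdot> c \<cdot> b" if "c \<in> rep a b" for a b c
    using that by (simp add: rep_def)
  show "a = b" if "(a \<oplus> neg one \<cdot> b) \<inter> (b \<oplus> neg one \<cdot> a) \<noteq> {}" for a b
    using that add_neg_eq by auto
  show "a \<cdot> a \<in> rep (b \<cdot> b) (c \<cdot> c)" if "a \<in> rep b c" for a b c
    using that by (rule rep_square)
qed

end

theorem theorem6p10:
  fixes add :: "'a \<Rightarrow> 'a \<Rightarrow> 'a set" and neg :: "'a \<Rightarrow> 'a"
    and mul :: "'a \<Rightarrow> 'a \<Rightarrow> 'a" and zero one :: 'a
    and D :: "'a \<Rightarrow> 'a \<Rightarrow> 'a set"
  assumes "real_reduced_multiring add neg mul zero one"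
    and "\<And>a b. D a b = {d. d \<in> add (mul (mul d d) a) (mul (mul d d) b)}"
  shows "real_semigroup mul one zero (neg one) D \<and>
         (\<forall>a b. Dt mul (neg one) D a b = add a b)"
proof -
  interpret rr_multiring add neg mul zero one
    by (rule rr_multiring.intro) (rule assms(1))
  have "D = rep"
    using assms(2) by (simp add: rep_def fun_eq_iff)
  then show ?thesis
    using real_semigroup_rep Dt_rep_eq_add by simp
qed

end
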